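(* Let $\Omega$ be a bounded measurable set in $\mathbb{R}^d$, and suppose there is a positive, locally finite Borel measure $\mu$ with $\mathbf{1}_\Omega\ast\mu=\mathbf{1}_{\Omega^c}$ a.e., where $\Omega^c=\mathbb{R}^d\setminus\Omega$. Then $\operatorname{supp}(\mu)\subset\mathbb{R}^d\setminus\Delta(\Omega)$, where $\Delta(\Omega)=\{x\in\mathbb{R}^d: m(\Omega\cap(\Omega+x))>0\}$.
   Context: $m$ is Lebesgue measure, $\operatorname{supp}(\mu)$ the closed support of $\mu$. *)

theory Defs
  imports "HOL-Analysis.Analysis"
begin

definition locally_finite_measure :: "'a::topological_space measure \<Rightarrow> bool" where
  "locally_finite_measure \<mu> \<longleftrightarrow>
     (\<forall>x. \<exists>U. open U \<and> x \<in> U \<and> emeasure \<mu> U < \<infinity>)"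

definition measure_support :: "'a::topological_space measure \<Rightarrow> 'a set" where
  "measure_support \<mu> = {x. \<forall>U. open U \<longrightarrow> x \<in> U \<longrightarrow> emeasure \<mu> U > 0}"

definition indicator_conv :: "'a::euclidean_space set \<Rightarrow> 'a measure \<Rightarrow> 'a \<Rightarrow> ennreal" where
  "indicator_conv \<Omega> \<mu> x = (\<integral>\<^sup>+ y. indicator \<Omega> (x - y) \<partial>\<mu>)"

definition Delta_set :: "'a::euclidean_space set \<Rightarrow> 'a set" where
  "Delta_set \<Omega> = {x. emeasure lebesgue (\<Omega> \<inter> ((\<lambda>y. y + x) ` \<Omega>)) > 0}"

end

theory Submission
  imports Defs
begin

text \<open>If \<open>t\<close> lay in both \<open>supp \<mu>\<close> and \<open>\<Delta>(\<Omega>)\<close>, then, since \<open>\<Delta>(\<Omega>)\<close> is open by Steinhaus'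
  theorem, \<open>\<Delta>(\<Omega>)\<close> would carry positive \<open>\<mu>\<close>-mass. But by Tonelli
  \<open>\<integral> m(\<Omega> \<inter> (\<Omega> + y)) d\<mu>(y) = \<integral>\<^sub>\<Omega> (1\<^sub>\<Omega> * \<mu>) dm\<close>, and the right-hand side vanishes because
  \<open>1\<^sub>\<Omega> * \<mu> = 0\<close> a.e. on \<open>\<Omega>\<close>; so \<open>m(\<Omega> \<inter> (\<Omega> + y)) = 0\<close> for \<open>\<mu>\<close>-a.e. \<open>y\<close>, i.e.
  \<open>\<mu>(\<Delta>(\<Omega>)) = 0\<close>. Tonelli is applied to a Borel part of \<open>\<Omega>\<close> with the same difference
  set, and needs \<open>\<mu>\<close> to be \<open>\<sigma>\<close>-finite, which local finiteness gives via Lindelof.\<close>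

lemma compact_translation_subset_open:
  fixes K V :: "'a::{heine_borel,real_normed_vector} set"
  assumes "compact K" "open V" "K \<subseteq> V"
  obtains d where "d > 0" "\<And>r. norm r < d \<Longrightarrow> (+) r ` K \<subseteq> V"
proof -
  obtain d where "d > 0" and d: "\<forall>x\<in>K. \<forall>y\<in>-V. d \<le> dist x y"
    using separate_compact_closed[of K "-V"] assms by auto
  have "(+) r ` K \<subseteq> V" if "norm r < d" for r
  proof
    fix z assume "z \<in> (+) r ` K"
    then obtain x where "x \<in> K" "z = r + x" by auto
    with that have "dist x z < d" by (simp add: dist_norm)
    with d \<open>x \<in> K\<close> show "z \<in> V" by force
  qed
  with \<open>d > 0\<close> that show ?thesis by blast
qed

lemma measure_inter_translation_ge:
  fixes K V :: "'a::euclidean_space set"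
  assumes K: "K \<in> lmeasurable" and VK: "V - K \<in> lmeasurable"
    and "K \<subseteq> V" "(+) r ` K \<subseteq> V"
  shows "measure lebesgue K - measure lebesgue (V - K) \<le> measure lebesgue (K \<inter> (+) r ` K)"
proof -
  have rK: "(+) r ` K \<in> lmeasurable" using K by (rule measurable_translation)
  then have KrK: "K \<inter> (+) r ` K \<in> lmeasurable" using K by blast
  have "measure lebesgue K = measure lebesgue ((+) r ` K)"
    by (simp add: measure_translation)
  also have "\<dots> \<le> measure lebesgue ((K \<inter> (+) r ` K) \<union> (V - K))"
    using assms by (intro measure_mono_fmeasurable[OF _ fmeasurableD[OF rK] fmeasurable.Un[OF KrK VK]])
      blast
  also have "\<dots> \<le> measure lebesgue (K \<inter> (+) r ` K) + measure lebesgue (V - K)"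
    using KrK VK by (intro measure_Un_le) auto
  finally show ?thesis by simp
qed

lemma lebesgue_inner_compact_pos:
  fixes A :: "'a::euclidean_space set"
  assumes "A \<in> sets lebesgue" "bounded A" "emeasure lebesgue A > 0"
  obtains K where "compact K" "K \<subseteq> A" "measure lebesgue K > 0"
proof -
  have A: "A \<in> lmeasurable" using assms bounded_set_imp_lmeasurable by blast
  then have pos: "measure lebesgue A > 0"
    using assms(3) by (simp add: emeasure_eq_measure2 zero_less_measure_iff)
  obtain K where K: "closed K" "K \<subseteq> A" "A - K \<in> lmeasurable"
      "emeasure lebesgue (A - K) < ennreal (measure lebesgue A)"
    using sets_lebesgue_inner_closed[OF assms(1) pos] .
  have "compact K" using K(1,2) assms(2) bounded_subset compact_eq_bounded_closed by blast
  have "measure lebesgue (A - K) < measure lebesgue A"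
    using K(3,4) by (simp add: emeasure_eq_measure2 ennreal_less_iff)
  moreover have "measure lebesgue A = measure lebesgue K + measure lebesgue (A - K)"
    using K(2) A lmeasurable_compact[OF \<open>compact K\<close>]
    by (subst measure_Diff) (auto simp: fmeasurable_def)
  ultimately show ?thesis using that \<open>compact K\<close> K(2) by simp
qed

lemma measure_pos_imp_emeasure_pos: "measure M A > 0 \<Longrightarrow> emeasure M A > 0"
  by (metis less_irrefl measure_def enn2real_0 not_gr_zero)

lemma steinhaus:
  fixes A :: "'a::euclidean_space set"
  assumes A: "A \<in> sets lebesgue" "bounded A" and pos: "emeasure lebesgue A > 0"
  obtains d where "d > 0" "\<And>r. norm r < d \<Longrightarrow> emeasure lebesgue (A \<inter> (+) r ` A) > 0"
proof -
  obtain K where K: "compact K" "K \<subseteq> A" "measure lebesgue K > 0"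
    using lebesgue_inner_compact_pos[OF A pos] .
  have Kl: "K \<in> lmeasurable" using K(1) by (rule lmeasurable_compact)
  obtain V where V: "open V" "K \<subseteq> V" "V - K \<in> lmeasurable"
      "emeasure lebesgue (V - K) < ennreal (measure lebesgue K)"
    using sets_lebesgue_outer_open[OF fmeasurableD[OF Kl] K(3)] .
  have small: "measure lebesgue (V - K) < measure lebesgue K"
    using V(3,4) by (simp add: emeasure_eq_measure2 ennreal_less_iff)
  obtain d where "d > 0" and d: "\<And>r. norm r < d \<Longrightarrow> (+) r ` K \<subseteq> V"
    using compact_translation_subset_open[OF K(1) V(1,2)] by blast
  show ?thesis
  proof (rule that[OF \<open>d > 0\<close>])
    fix r :: 'a assume "norm r < d"
    then have "measure lebesgue (K \<inter> (+) r ` K) > 0"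
      using measure_inter_translation_ge[OF Kl V(3) V(2) d] small by fastforce
    then have "emeasure lebesgue (K \<inter> (+) r ` K) > 0" by (rule measure_pos_imp_emeasure_pos)
    also have "\<dots> \<le> emeasure lebesgue (A \<inter> (+) r ` A)"
      using K(2) A(1) lebesgue_sets_translation[OF A(1), of r]
      by (intro emeasure_mono) auto
    finally show "emeasure lebesgue (A \<inter> (+) r ` A) > 0" .
  qed
qed

lemma translation_eq_vimage:
  fixes S :: "'a::ab_group_add set"
  shows "(+) a ` S = {x. x - a \<in> S}" and "(\<lambda>x. x + a) ` S = {x. x - a \<in> S}"
  by (force simp: algebra_simps)+

lemma lebesgue_sets_translate:
  fixes S :: "'a::euclidean_space set"
  assumes "S \<in> sets lebesgue"
  shows "{x. x - a \<in> S} \<in> sets lebesgue"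
  using lebesgue_sets_translation[OF assms, of a] by (simp add: translation_eq_vimage)

lemma null_sets_lebesgue_translate:
  fixes N :: "'a::euclidean_space set"
  assumes "N \<in> null_sets lebesgue"
  shows "{x. x - a \<in> N} \<in> null_sets lebesgue"
  using emeasure_lebesgue_affine[of 1 a N] assms lebesgue_sets_translate[of N a]
  by (simp add: null_sets_def translation_eq_vimage)

lemma sets_lebesgue_borel_part:
  fixes \<Omega> :: "'a::euclidean_space set"
  assumes "\<Omega> \<in> sets lebesgue"
  obtains S where "S \<in> sets borel" "S \<subseteq> \<Omega>" "\<Omega> - S \<in> null_sets lebesgue"
proof -
  obtain S N N' where SN: "\<Omega> = S \<union> N" "N \<subseteq> N'" "N' \<in> null_sets lborel" "S \<in> sets lborel"
    using assms by (rule sets_completionE)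
  have "\<Omega> - S \<subseteq> N'" using SN(1,2) by blast
  then have "\<Omega> - S \<in> null_sets lebesgue"
    using null_sets_completionI[OF SN(3)] by (rule null_sets_completion_subset)
  with SN(1,4) that show ?thesis by simp
qed

lemma Delta_set_eq: "Delta_set \<Omega> = {t. emeasure lebesgue (\<Omega> \<inter> {x. x - t \<in> \<Omega>}) > 0}"
  by (simp add: Delta_set_def translation_eq_vimage)

lemma open_Delta_set:
  fixes \<Omega> :: "'a::euclidean_space set"
  assumes \<Omega>: "\<Omega> \<in> sets lebesgue" "bounded \<Omega>"
  shows "open (Delta_set \<Omega>)"
  unfolding open_contains_ball
proof
  fix t assume "t \<in> Delta_set \<Omega>"
  define A where "A = \<Omega> \<inter> {x. x - t \<in> \<Omega>}"
  have "A \<in> sets lebesgue" using \<Omega>(1) lebesgue_sets_translate by (auto simp: A_def)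
  moreover have "bounded A" using \<Omega>(2) by (simp add: A_def bounded_Int)
  moreover have "emeasure lebesgue A > 0" using \<open>t \<in> Delta_set \<Omega>\<close> by (simp add: Delta_set_eq A_def)
  ultimately obtain d where "d > 0"
    and d: "\<And>r. norm r < d \<Longrightarrow> emeasure lebesgue (A \<inter> (+) r ` A) > 0"
    using steinhaus by blast
  have "ball t d \<subseteq> Delta_set \<Omega>"
  proof
    fix s assume "s \<in> ball t d"
    then have "emeasure lebesgue (A \<inter> (+) (s - t) ` A) > 0"
      by (intro d) (simp add: dist_norm norm_minus_commute)
    also have "\<dots> \<le> emeasure lebesgue (\<Omega> \<inter> {x. x - s \<in> \<Omega>})"
    proof (rule emeasure_mono)
      show "A \<inter> (+) (s - t) ` A \<subseteq> \<Omega> \<inter> {x. x - s \<in> \<Omega>}"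
        by (auto simp: A_def translation_eq_vimage diff_diff_eq)
      show "\<Omega> \<inter> {x. x - s \<in> \<Omega>} \<in> sets lebesgue"
        using \<Omega>(1) lebesgue_sets_translate by blast
    qed
    finally show "s \<in> Delta_set \<Omega>" by (simp add: Delta_set_eq)
  qed
  with \<open>d > 0\<close> show "\<exists>e>0. ball t e \<subseteq> Delta_set \<Omega>" by blast
qed

lemma Delta_set_cong_null:
  fixes S \<Omega> :: "'a::euclidean_space set"
  assumes S: "S \<in> sets lebesgue" "S \<subseteq> \<Omega>" and null: "\<Omega> - S \<in> null_sets lebesgue"
  shows "Delta_set \<Omega> = Delta_set S"
proof -
  have "\<Omega> = S \<union> (\<Omega> - S)" using S(2) by blast
  then have \<Omega>: "\<Omega> \<in> sets lebesgue" using S(1) null_setsD2[OF null] by (metis sets.Un)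
  have "emeasure lebesgue (\<Omega> \<inter> {x. x - t \<in> \<Omega>}) = emeasure lebesgue (S \<inter> {x. x - t \<in> S})" for t
  proof (rule antisym)
    let ?N = "(\<Omega> - S) \<union> {x. x - t \<in> \<Omega> - S}"
    have N: "?N \<in> null_sets lebesgue" using null null_sets_lebesgue_translate by blast
    have St: "S \<inter> {x. x - t \<in> S} \<in> sets lebesgue" using S(1) lebesgue_sets_translate by blast
    have "emeasure lebesgue (\<Omega> \<inter> {x. x - t \<in> \<Omega>}) \<le> emeasure lebesgue ((S \<inter> {x. x - t \<in> S}) \<union> ?N)"
      using St N by (intro emeasure_mono) auto
    also have "\<dots> = emeasure lebesgue (S \<inter> {x. x - t \<in> S})"
      using St N by (rule emeasure_Un_null_set)
    finally show "emeasure lebesgue (\<Omega> \<inter> {x. x - t \<in> \<Omega>}) \<le> emeasure lebesgue (S \<inter> {x. x - t \<in> S})" .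
    show "emeasure lebesgue (S \<inter> {x. x - t \<in> S}) \<le> emeasure lebesgue (\<Omega> \<inter> {x. x - t \<in> \<Omega>})"
      using S(2) \<Omega> lebesgue_sets_translate by (intro emeasure_mono) auto
  qed
  then show ?thesis by (simp add: Delta_set_eq)
qed

lemma emeasure_inter_translate_eq_nn_integral:
  fixes S :: "'a::euclidean_space set"
  assumes [measurable]: "S \<in> sets borel"
  shows "emeasure lebesgue (S \<inter> {x. x - y \<in> S}) = (\<integral>\<^sup>+ x. indicator S x * indicator S (x - y) \<partial>lborel)"
proof -
  have [measurable]: "S \<inter> {x. x - y \<in> S} \<in> sets borel" by measurable
  then have "emeasure lebesgue (S \<inter> {x. x - y \<in> S}) = emeasure lborel (S \<inter> {x. x - y \<in> S})"
    by (simp add: emeasure_completion)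
  also have "\<dots> = (\<integral>\<^sup>+ x. indicator (S \<inter> {x. x - y \<in> S}) x \<partial>lborel)"
    by (simp add: nn_integral_indicator)
  also have "\<dots> = (\<integral>\<^sup>+ x. indicator S x * indicator S (x - y) \<partial>lborel)"
    by (intro nn_integral_cong) (simp add: indicator_def)
  finally show ?thesis .
qed

lemma emeasure_Delta_set_eq_0:
  fixes S :: "'a::euclidean_space set" and \<nu> :: "'a measure"
  assumes S[measurable]: "S \<in> sets borel" and \<nu>: "sets \<nu> = sets borel" "sigma_finite_measure \<nu>"
    and conv: "AE x in lebesgue. x \<in> S \<longrightarrow> indicator_conv S \<nu> x = 0"
  shows "emeasure \<nu> (Delta_set S) = 0"
proof -
  interpret pair_sigma_finite lborel \<nu>
    using \<nu>(2) by (intro pair_sigma_finite.intro sigma_finite_lborel)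
  have \<nu>_meas: "borel_measurable \<nu> = borel_measurable borel"
    using \<nu>(1) by (rule measurable_cong_sets) simp
  define f where "f = (\<lambda>(x::'a, y). indicator S x * indicator S (x - y) :: ennreal)"
  define h where "h y = (\<integral>\<^sup>+ x. f (x, y) \<partial>lborel)" for y
  have f: "f \<in> borel_measurable (lborel \<Otimes>\<^sub>M \<nu>)"
  proof -
    have seq: "sets (lborel \<Otimes>\<^sub>M \<nu>) = sets (lborel \<Otimes>\<^sub>M lborel)"
      by (rule sets_pair_measure_cong) (auto simp: \<nu>(1))
    have "f \<in> borel_measurable (lborel \<Otimes>\<^sub>M lborel)" unfolding f_def by measurable
    then show ?thesis by (simp only: measurable_cong_sets[OF seq refl])
  qed
  have h: "h \<in> borel_measurable \<nu>" unfolding \<nu>_meas h_def f_def by measurable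
  have Delta: "Delta_set S = {y. h y > 0}"
    unfolding Delta_set_eq emeasure_inter_translate_eq_nn_integral[OF S] h_def f_def by simp
  have "(\<integral>\<^sup>+ y. h y \<partial>\<nu>) = (\<integral>\<^sup>+ x. (\<integral>\<^sup>+ y. f (x, y) \<partial>\<nu>) \<partial>lborel)"
    unfolding h_def by (rule Fubini[OF f])
  also have "\<dots> = (\<integral>\<^sup>+ (x::'a). 0 \<partial>lborel)"
  proof (rule nn_integral_cong_AE)
    show "AE x in lborel. (\<integral>\<^sup>+ y. f (x, y) \<partial>\<nu>) = 0"
      using conv unfolding AE_completion_iff
    proof eventually_elim
      case (elim x)
      have "(\<integral>\<^sup>+ y. f (x, y) \<partial>\<nu>) = indicator S x * indicator_conv S \<nu> x"
        unfolding f_def indicator_conv_def by (simp add: \<nu>_meas nn_integral_cmult)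
      with elim show ?case by (cases "x \<in> S") auto
    qed
  qed
  finally have "AE y in \<nu>. h y = 0" using h by (simp add: nn_integral_0_iff_AE)
  moreover have "Delta_set S \<in> sets \<nu>" unfolding Delta \<nu>(1) h_def f_def by measurable
  ultimately show ?thesis
    by (subst (asm) AE_iff_measurable[of "Delta_set S"])
      (auto simp: Delta sets_eq_imp_space_eq[OF \<nu>(1)] zero_less_iff_neq_zero)
qed

lemma indicator_conv_mono: "S \<subseteq> \<Omega> \<Longrightarrow> indicator_conv S \<mu> x \<le> indicator_conv \<Omega> \<mu> x"
  unfolding indicator_conv_def by (intro nn_integral_mono) (auto simp: indicator_def)

lemma AE_indicator_conv_subset_eq_0:
  assumes "S \<subseteq> \<Omega>"
    and "AE x in lebesgue. indicator_conv \<Omega> \<mu> x = indicator (UNIV - \<Omega>) x"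
  shows "AE x in lebesgue. x \<in> S \<longrightarrow> indicator_conv S \<mu> x = 0"
  using assms(2)
proof eventually_elim
  case (elim x)
  show ?case
  proof
    assume "x \<in> S"
    with elim assms(1) have "indicator_conv \<Omega> \<mu> x = 0" by auto
    with indicator_conv_mono[OF assms(1)] show "indicator_conv S \<mu> x = 0" by (metis le_zero_eq)
  qed
qed

lemma locally_finite_measure_imp_sigma_finite:
  fixes \<mu> :: "'a::second_countable_topology measure"
  assumes sets: "sets \<mu> = sets borel" and fin: "locally_finite_measure \<mu>"
  shows "sigma_finite_measure \<mu>"
proof
  let ?F = "{U. open U \<and> emeasure \<mu> U < \<infinity>}"
  obtain F where F: "F \<subseteq> ?F" "countable F" "\<Union>F = \<Union>?F"
    using Lindelof[of ?F] by auto
  have "\<Union>?F = UNIV"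
    using fin unfolding locally_finite_measure_def by blast
  show "\<exists>A. countable A \<and> A \<subseteq> sets \<mu> \<and> \<Union>A = space \<mu> \<and> (\<forall>a\<in>A. emeasure \<mu> a \<noteq> \<infinity>)"
  proof (intro exI conjI)
    show "F \<subseteq> sets \<mu>" using F(1) unfolding sets by auto
    show "\<Union>F = space \<mu>" using F(3) \<open>\<Union>?F = UNIV\<close> sets_eq_imp_space_eq[OF sets] by simp
    show "\<forall>a\<in>F. emeasure \<mu> a \<noteq> \<infinity>" using F(1) by auto
  qed (use F(2) in blast)
qed

theorem corollary2p6:
  fixes \<Omega> :: "'a::euclidean_space set" and \<mu> :: "'a measure"
  assumes "\<Omega> \<in> sets lebesgue" and "bounded \<Omega>"
    and "sets \<mu> = sets borel"
    and "locally_finite_measure \<mu>"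
    and "AE x in lebesgue. indicator_conv \<Omega> \<mu> x = indicator (UNIV - \<Omega>) x"
  shows "measure_support \<mu> \<subseteq> UNIV - Delta_set \<Omega>"
proof -
  obtain S where S: "S \<in> sets borel" "S \<subseteq> \<Omega>" "\<Omega> - S \<in> null_sets lebesgue"
    using sets_lebesgue_borel_part[OF assms(1)] .
  have Delta: "Delta_set \<Omega> = Delta_set S"
    using S by (intro Delta_set_cong_null) (auto simp: sets_completionI_sets)
  have "emeasure \<mu> (Delta_set S) = 0"
    using emeasure_Delta_set_eq_0[OF S(1) assms(3) locally_finite_measure_imp_sigma_finite[OF assms(3,4)]
        AE_indicator_conv_subset_eq_0[OF S(2) assms(5)]] .
  then show ?thesis
    using open_Delta_set[OF assms(1,2)] unfolding Delta[symmetric] measure_support_def by force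
qed

end
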